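(* Consider the generalized trimmed lasso problem $$\min_{x_0,\ldots,x_L}\ f(x_0,x_1,\ldots,x_L)+\sum_{l=1}^L\gamma_l T_{K_l,m_l,p_l}(D_lx_l-c_l)$$ with $f:\mathbb{R}^{n_0+\cdots+n_L}\to\mathbb{R}$ directionally differentiable, and let $x^*=(x_0^*,\ldots,x_L^* )$ be a d-stationary point. Fix $l\in[L]$ and suppose: (A1) there is $\overline{x}_l\in\mathbb{R}^{n_l}$ with $D_l\overline{x}_l-c_l=0$; (A2) there is $\Gamma_l>0$ with $\sup_{d_l\in\mathbb{R}^{n_l},\|d_l\|_2=1}f'(x^*;(0,\ldots,0,d_l,0,\ldots,0))\le\Gamma_l$ (where $d_l$ sits in the $l$-th block). If $\gamma_l>\Gamma_l/\sigma_{K_l,m_l,p_l}(D_l)$, then $T_{K_l,m_l,p_l}(D_lx_l^*-c_l)=0$. Moreover, in the case $p_l=1$, $D_l=I$ (so $m_l=n_l$), $c_l=0$, and $f(x_0,\ldots,x_L)=g(x_0,\ldots,x_L)+\sum_{k\in[L]}\eta_k\|x_k\|_1$ with $\eta_k\ge0$ and $g$ real-valued and directionally differentiable, the same conclusion $T_{K_l,n_l,1}(x_l^* )=0$ holds whenever $\gamma_l>\Gamma_l$, where now $\Gamma_l$ is any real number with $$\sup_{d_l\in\{-1,0,1\}^{n_l},\ \|d_l\|_1=1} g'(x^*;(0,\ldots,d_l,\ldots,0))-\eta_l\le\Gamma_l.$$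
   Context: Trimmed $\ell_1$ norm: for $z=(z_1^\top,\ldots,z_m^\top)^\top\in\mathbb{R}^{mp}$, $z_i\in\mathbb{R}^p$, $K\in\{0,\ldots,m-1\}$: $T_{K,m,p}(z)=\min_{\Lambda\subset[m],|\Lambda|=m-K}\sum_{i\in\Lambda}\|z_i\|_2$. Problem data: $n_0\ge0$, $\gamma_l>0$, $K_l\in\{0,\ldots,m_l-1\}$, $c_l\in\mathbb{R}^{m_lp_l}$, $D_l\ne0$ an $m_lp_l\times n_l$ matrix. Directional derivative $h'(x;d)=\lim_{\varsigma\searrow0}(h(x+\varsigma d)-h(x))/\varsigma$; a function is directionally differentiable if this exists in $\mathbb{R}$ everywhere on its domain in feasible directions; $x^*$ is d-stationary if the directional derivative of the whole objective at $x^*$ is $\ge0$ in every direction. For a matrix $A\neq0$, $\sigma_{\min}(A)$ is its smallest nonzero singular value. For $D=((D)_1^\top,\ldots,(D)_m^\top)^\top\ne0$ with blocks $(D)_i\in\mathbb{R}^{p\times n}$ and $\Lambda\subset[m]$, $(D)_\Lambda$ is the submatrix formed by the blocks $(D)_i$, $i\in\Lambda$; define $\sigma_{K,m,p}(D)=\sigma_{\min}(D)$ if $D$ is surjective, and otherwise $\sigma_{K,m,p}(D)=\min\{\sigma_{\min}((D)_\Lambda)\mid \Lambda\subset[m],|\Lambda|=m-K,(D)_\Lambda\ne0\}$. *)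

theory Defs
  imports Complex_Main "Jordan_Normal_Form.Char_Poly" "Jordan_Normal_Form.DL_Submatrix"
begin

(* Whole variable x = (x_0,...,x_L) in R^(n_0+...+n_L) is a real vec of dimension tot_dim n L.
   Block l occupies coordinates off n l, ..., off n l + n l - 1. *)
definition off :: "(nat \<Rightarrow> nat) \<Rightarrow> nat \<Rightarrow> nat" where
  "off n l = (\<Sum>k<l. n k)"

definition tot_dim :: "(nat \<Rightarrow> nat) \<Rightarrow> nat \<Rightarrow> nat" where
  "tot_dim n L = (\<Sum>k\<le>L. n k)"

definition blk :: "(nat \<Rightarrow> nat) \<Rightarrow> nat \<Rightarrow> real vec \<Rightarrow> real vec" where
  "blk n l x = vec (n l) (\<lambda>i. x $ (off n l + i))"

definition emb :: "(nat \<Rightarrow> nat) \<Rightarrow> nat \<Rightarrow> nat \<Rightarrow> real vec \<Rightarrow> real vec" where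
  "emb n L l d = vec (tot_dim n L)
     (\<lambda>j. if off n l \<le> j \<and> j < off n l + n l then d $ (j - off n l) else 0)"

definition norm2 :: "real vec \<Rightarrow> real" where
  "norm2 v = sqrt (\<Sum>i<dim_vec v. (v $ i)\<^sup>2)"

definition norm1 :: "real vec \<Rightarrow> real" where
  "norm1 v = (\<Sum>i<dim_vec v. \<bar>v $ i\<bar>)"

(* Euclidean norm of the i-th block z_i in R^p of z in R^(m p) *)
definition bnorm :: "nat \<Rightarrow> real vec \<Rightarrow> nat \<Rightarrow> real" where
  "bnorm p z i = sqrt (\<Sum>j<p. (z $ (i * p + j))\<^sup>2)"

definition trimmed :: "nat \<Rightarrow> nat \<Rightarrow> nat \<Rightarrow> real vec \<Rightarrow> real" where
  "trimmed K m p z = Min ((\<lambda>\<Lambda>. \<Sum>i\<in>\<Lambda>. bnorm p z i) ` {\<Lambda>. \<Lambda> \<subseteq> {..<m} \<and> card \<Lambda> = m - K})"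

definition has_dir_deriv :: "(real vec \<Rightarrow> real) \<Rightarrow> real vec \<Rightarrow> real vec \<Rightarrow> real \<Rightarrow> bool" where
  "has_dir_deriv h x d D \<longleftrightarrow> ((\<lambda>t. (h (x + t \<cdot>\<^sub>v d) - h x) / t) \<longlongrightarrow> D) (at_right 0)"

definition dir_deriv :: "(real vec \<Rightarrow> real) \<Rightarrow> real vec \<Rightarrow> real vec \<Rightarrow> real" where
  "dir_deriv h x d = Lim (at_right 0) (\<lambda>t. (h (x + t \<cdot>\<^sub>v d) - h x) / t)"

definition dir_differentiable :: "nat \<Rightarrow> (real vec \<Rightarrow> real) \<Rightarrow> bool" where
  "dir_differentiable N h \<longleftrightarrow>
     (\<forall>x\<in>carrier_vec N. \<forall>d\<in>carrier_vec N. \<exists>D. has_dir_deriv h x d D)"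

definition d_stationary :: "nat \<Rightarrow> (real vec \<Rightarrow> real) \<Rightarrow> real vec \<Rightarrow> bool" where
  "d_stationary N h x \<longleftrightarrow> x \<in> carrier_vec N \<and>
     (\<forall>d\<in>carrier_vec N. (\<exists>D. has_dir_deriv h x d D) \<and> dir_deriv h x d \<ge> 0)"

definition singular_values :: "real mat \<Rightarrow> real set" where
  "singular_values A = {sqrt e | e. eigenvalue (transpose_mat A * A) e}"

definition sigma_min :: "real mat \<Rightarrow> real" where
  "sigma_min A = Min {s \<in> singular_values A. s \<noteq> 0}"

definition surjective_mat :: "real mat \<Rightarrow> bool" where
  "surjective_mat A \<longleftrightarrow>
     (\<forall>y\<in>carrier_vec (dim_row A). \<exists>x\<in>carrier_vec (dim_col A). A *\<^sub>v x = y)"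

(* (D)_\<Lambda>: rows of the blocks (D)_i, i in \<Lambda>, each block having p rows *)
definition block_rows :: "nat \<Rightarrow> real mat \<Rightarrow> nat set \<Rightarrow> real mat" where
  "block_rows p D \<Lambda> = submatrix D {r. r div p \<in> \<Lambda>} UNIV"

definition nonzero_mat :: "real mat \<Rightarrow> bool" where
  "nonzero_mat A \<longleftrightarrow> A \<noteq> 0\<^sub>m (dim_row A) (dim_col A)"

definition sigma_K :: "nat \<Rightarrow> nat \<Rightarrow> nat \<Rightarrow> real mat \<Rightarrow> real" where
  "sigma_K K m p D = (if surjective_mat D then sigma_min D
     else Min {sigma_min (block_rows p D \<Lambda>) | \<Lambda>.
                 \<Lambda> \<subseteq> {..<m} \<and> card \<Lambda> = m - K \<and> nonzero_mat (block_rows p D \<Lambda>)})"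

definition objective ::
  "nat \<Rightarrow> (nat \<Rightarrow> nat) \<Rightarrow> (nat \<Rightarrow> nat) \<Rightarrow> (nat \<Rightarrow> nat) \<Rightarrow> (nat \<Rightarrow> nat) \<Rightarrow> (nat \<Rightarrow> real)
   \<Rightarrow> (nat \<Rightarrow> real vec) \<Rightarrow> (nat \<Rightarrow> real mat) \<Rightarrow> (real vec \<Rightarrow> real) \<Rightarrow> real vec \<Rightarrow> real" where
  "objective L n m p K \<gamma> c D f x =
     f x + (\<Sum>k\<in>{1..L}. \<gamma> k * trimmed (K k) (m k) (p k) (D k *\<^sub>v blk n k x - c k))"

end

theory Submission
  imports Defs "HOL-Analysis.Function_Topology" "HOL-Analysis.L2_Norm"
begin

text \<open>Suppose the trimmed term \<open>T\<close> of block \<open>l\<close> is positive at a d-stationary point. Choose an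
  index set \<open>\<Lambda>\<close> realising it and a direction \<open>d\<close> such that \<open>D\<^sub>l d\<close> cancels the blocks of
  \<open>D\<^sub>l x\<^sub>l - c\<^sub>l\<close> indexed by \<open>\<Lambda>\<close>. By (A1) such directions exist, and one of least norm satisfies
  \<open>\<sigma> norm2 d \<le> T\<close> for \<open>\<sigma> = sigma_K (D\<^sub>l)\<close>: on the orthogonal complement of the kernel the
  Rayleigh quotient of the Gram matrix is at least its least positive eigenvalue. Along \<open>d\<close> the
  trimmed term falls at rate \<open>T\<close>, while by (A2) \<open>f\<close> rises at rate at most
  \<open>norm2 d \<Gamma>\<^sub>l \<le> T \<Gamma>\<^sub>l / \<sigma> < \<gamma>\<^sub>l T\<close>, contradicting stationarity. When \<open>D\<^sub>l\<close> is the
  identity, a signed coordinate vector inside \<open>\<Lambda>\<close> lowers both the trimmed term and the \<open>l\<^sub>1\<close>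
  term of block \<open>l\<close> at unit rate, so the objective decreases at rate at least \<open>\<gamma>\<^sub>l - \<Gamma>\<^sub>l > 0\<close>.\<close>

section \<open>Minimisation over real vectors\<close>

text \<open>A vector of dimension \<open>n\<close> is identified with its zero-padded coordinate function in the
  product space \<open>nat \<Rightarrow> real\<close>, where Tychonoff provides the compactness that \<open>real vec\<close> lacks.\<close>

lemma continuous_on_vec_index: "continuous_on UNIV (\<lambda>f. vec n f $ i :: real)"
proof (cases "i < n")
  case False
  then have "(\<lambda>f. vec n f $ i) = (\<lambda>f. vec n (\<lambda>_. 0::real) $ i)"
    by transfer (simp add: mk_vec_def)
  then show ?thesis by (metis continuous_on_const)
qed simp

lemma compact_if_closed_bounded_coordinates:
  fixes C :: "(nat \<Rightarrow> real) set"
  assumes "closed C" and "\<And>f i. f \<in> C \<Longrightarrow> \<bar>f i\<bar> \<le> R"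
  shows "compact C"
proof -
  have "compactin (product_topology (\<lambda>i. euclidean) UNIV) (Pi\<^sub>E UNIV (\<lambda>i::nat. {-R..R::real}))"
    by (simp add: compactin_PiE)
  then have "compact (Pi\<^sub>E UNIV (\<lambda>i::nat. {-R..R::real}))"
    by (simp add: euclidean_product_topology)
  then have "compact (Pi\<^sub>E UNIV (\<lambda>i. {-R..R}) \<inter> C)"
    using assms(1) by (rule compact_Int_closed)
  moreover have "f i \<in> {-R..R}" if "f \<in> C" for f i
    using assms(2)[OF that, of i] by (simp add: abs_le_iff)
  then have "C \<subseteq> Pi\<^sub>E UNIV (\<lambda>i. {-R..R})"
    unfolding PiE_UNIV_domain by blast
  ultimately show ?thesis by (simp add: Int_absorb1)
qed

lemma vec_continuous_attains_inf:
  fixes S :: "real vec set" and \<phi> :: "real vec \<Rightarrow> real"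
  assumes S: "S \<subseteq> carrier_vec n" and v0: "v0 \<in> S" and R: "0 \<le> R"
    and bnd: "\<And>v i. v \<in> S \<Longrightarrow> i < n \<Longrightarrow> \<bar>v $ i\<bar> \<le> R"
    and closed: "closed {f. vec n f \<in> S \<and> (\<forall>i\<ge>n. f i = 0)}"
    and cont: "continuous_on UNIV (\<lambda>f. \<phi> (vec n f))"
  shows "\<exists>v\<in>S. \<forall>u\<in>S. \<phi> v \<le> \<phi> u"
proof -
  define C where "C = {f. vec n f \<in> S \<and> (\<forall>i\<ge>n. f i = 0)}"
  define pad where "pad = (\<lambda>v::real vec. \<lambda>i. if i < n then v $ i else 0)"
  have vec_pad: "vec n (pad v) = v" if "v \<in> S" for v
    using S that by (intro eq_vecI) (auto simp: pad_def)
  have pad_in: "pad v \<in> C" if "v \<in> S" for v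
    using vec_pad[OF that] that by (simp add: C_def pad_def)
  have "compact C"
  proof (rule compact_if_closed_bounded_coordinates)
    show "closed C" using closed by (simp add: C_def)
    fix f i assume "f \<in> C"
    then show "\<bar>f i\<bar> \<le> R"
      using bnd[of "vec n f" i] R by (cases "i < n") (auto simp: C_def)
  qed
  moreover have "C \<noteq> {}" using pad_in[OF v0] by blast
  moreover have "continuous_on C (\<lambda>f. \<phi> (vec n f))"
    using cont by (rule continuous_on_subset) simp
  ultimately obtain f0 where "f0 \<in> C" and f0: "\<And>f. f \<in> C \<Longrightarrow> \<phi> (vec n f0) \<le> \<phi> (vec n f)"
    by (metis continuous_attains_inf)
  moreover have "\<phi> (vec n f0) \<le> \<phi> u" if "u \<in> S" for u
    using f0[OF pad_in[OF that]] vec_pad[OF that] by simp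
  ultimately show ?thesis unfolding C_def by blast
qed

definition continuous_vec_map :: "nat \<Rightarrow> ((nat \<Rightarrow> real) \<Rightarrow> real vec) \<Rightarrow> bool" where
  "continuous_vec_map n F \<longleftrightarrow>
     (\<forall>f. F f \<in> carrier_vec n) \<and> (\<forall>i<n. continuous_on UNIV (\<lambda>f. F f $ i))"

lemma continuous_vec_map_vec: "continuous_vec_map n (\<lambda>f. vec n f)"
  unfolding continuous_vec_map_def using continuous_on_vec_index by auto

lemma continuous_vec_map_const: "c \<in> carrier_vec n \<Longrightarrow> continuous_vec_map n (\<lambda>_. c)"
  unfolding continuous_vec_map_def by auto

lemma continuous_on_scalar_prod:
  assumes F: "continuous_vec_map n F" and G: "continuous_vec_map n G"
  shows "continuous_on UNIV (\<lambda>f. F f \<bullet> G f)"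
proof -
  have "dim_vec (G f) = n" for f
    using G unfolding continuous_vec_map_def carrier_vec_def by auto
  then have eq: "(\<lambda>f. F f \<bullet> G f) = (\<lambda>f. \<Sum>i\<in>{0..<n}. F f $ i * G f $ i)"
    unfolding scalar_prod_def by simp
  show ?thesis
    unfolding eq by (intro continuous_on_sum continuous_on_mult)
      (use F G in \<open>auto simp: continuous_vec_map_def\<close>)
qed

lemma continuous_vec_map_mult_mat_vec:
  assumes A: "A \<in> carrier_mat r n" and F: "continuous_vec_map n F"
  shows "continuous_vec_map r (\<lambda>f. A *\<^sub>v F f)"
  unfolding continuous_vec_map_def
proof (intro conjI allI impI)
  fix f show "A *\<^sub>v F f \<in> carrier_vec r" using A by (simp add: carrier_vecI)
next
  fix i assume "i < r"
  then have eq: "(\<lambda>f. (A *\<^sub>v F f) $ i) = (\<lambda>f. row A i \<bullet> F f)" using A by auto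
  have "continuous_vec_map n (\<lambda>_. row A i)"
    using A by (intro continuous_vec_map_const) auto
  then show "continuous_on UNIV (\<lambda>f. (A *\<^sub>v F f) $ i)"
    unfolding eq by (rule continuous_on_scalar_prod[OF _ F])
qed

lemma closed_Collect_bounded_all:
  assumes "\<And>i. Q i \<Longrightarrow> closed {x. P i x}"
  shows "closed {x. \<forall>i. Q i \<longrightarrow> P i x}"
proof -
  have "{x. \<forall>i. Q i \<longrightarrow> P i x} = (\<Inter>i\<in>{i. Q i}. {x. P i x})" by auto
  then show ?thesis using assms by (auto intro: closed_INT)
qed

lemma closed_Collect_vec_padded: "closed {f::nat \<Rightarrow> real. \<forall>i. n \<le> i \<longrightarrow> f i = 0}"
  by (rule closed_Collect_bounded_all)
    (intro closed_Collect_eq continuous_on_product_coordinates continuous_on_const)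

lemma sprod_self_nonneg: "0 \<le> (v::real vec) \<bullet> v"
  using conjugate_square_ge_0_vec[of v] by simp

lemma sprod_self_eq_0_iff: "(v::real vec) \<in> carrier_vec n \<Longrightarrow> v \<bullet> v = 0 \<longleftrightarrow> v = 0\<^sub>v n"
  using conjugate_square_eq_0_vec[of v n] by simp

lemma sprod_self_pos: "(v::real vec) \<in> carrier_vec n \<Longrightarrow> v \<noteq> 0\<^sub>v n \<Longrightarrow> 0 < v \<bullet> v"
  using sprod_self_nonneg[of v] sprod_self_eq_0_iff[of v n] by linarith

lemma norm2_eq_sqrt_sprod: "norm2 v = sqrt (v \<bullet> v)"
  unfolding norm2_def scalar_prod_def by (simp add: power2_eq_square atLeast0LessThan)

lemma norm2_nonneg: "0 \<le> norm2 v"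
  by (simp add: norm2_def sum_nonneg)

lemma index_square_le_sprod_self:
  assumes "(v::real vec) \<in> carrier_vec n" and "i < n"
  shows "(v $ i)\<^sup>2 \<le> v \<bullet> v"
proof -
  have "v $ i * v $ i \<le> (\<Sum>j\<in>{0..<n}. v $ j * v $ j)"
    using assms(2) by (intro member_le_sum) auto
  then show ?thesis using assms(1) by (simp add: scalar_prod_def power2_eq_square)
qed

lemma sprod_add_smult_self:
  assumes u: "(u::real vec) \<in> carrier_vec n" and v: "v \<in> carrier_vec n"
  shows "(u + t \<cdot>\<^sub>v v) \<bullet> (u + t \<cdot>\<^sub>v v) = u \<bullet> u + 2 * t * (u \<bullet> v) + t\<^sup>2 * (v \<bullet> v)"
proof -
  have "(u + t \<cdot>\<^sub>v v) \<bullet> (u + t \<cdot>\<^sub>v v) =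
      (\<Sum>i\<in>{0..<n}. u $ i * u $ i + 2 * t * (u $ i * v $ i) + t\<^sup>2 * (v $ i * v $ i))"
    using u v unfolding scalar_prod_def
    by (auto intro!: sum.cong simp: algebra_simps power2_eq_square)
  then show ?thesis
    using u v by (simp add: scalar_prod_def sum.distrib sum_distrib_left)
qed

lemma linear_coeff_eq_0_if_nonneg:
  fixes a b :: real
  assumes "\<And>t. 0 \<le> a * t + b * t\<^sup>2"
  shows "a = 0"
proof (rule ccontr)
  assume a: "a \<noteq> 0"
  define s where "s = 1 / (\<bar>b\<bar> + 1)"
  have s: "s > 0" "b * s < 1"
    unfolding s_def by (auto simp: field_simps)
  have "0 \<le> a * (- a * s) + b * (- a * s)\<^sup>2" by (rule assms)
  also have "\<dots> = a\<^sup>2 * s * (b * s - 1)" by (simp add: algebra_simps power2_eq_square)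
  also have "\<dots> < 0" using a s by (intro mult_pos_neg) auto
  finally show False by simp
qed

section \<open>Singular values\<close>

definition orth_ker :: "real mat \<Rightarrow> nat \<Rightarrow> real vec \<Rightarrow> bool" where
  "orth_ker A n v \<longleftrightarrow> (\<forall>k\<in>carrier_vec n. A *\<^sub>v k = 0\<^sub>v (dim_row A) \<longrightarrow> v \<bullet> k = 0)"

lemma orth_ker_add_smult:
  assumes "orth_ker A n v" "orth_ker A n u" "v \<in> carrier_vec n" "u \<in> carrier_vec n"
  shows "orth_ker A n (v + t \<cdot>\<^sub>v u)"
  using assms unfolding orth_ker_def by (auto simp: add_scalar_prod_distrib)

lemma mult_mat_vec_add_smult:
  fixes A :: "real mat"
  assumes "A \<in> carrier_mat r n" "v \<in> carrier_vec n" "u \<in> carrier_vec n"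
  shows "A *\<^sub>v (v + t \<cdot>\<^sub>v u) = A *\<^sub>v v + t \<cdot>\<^sub>v (A *\<^sub>v u)"
  using assms by (simp add: mult_add_distrib_mat_vec mult_mat_vec)

lemma eq_if_minus_vec_eq_0:
  fixes a b :: "'a :: group_add vec"
  assumes "a \<in> carrier_vec n" "b \<in> carrier_vec n" "a - b = 0\<^sub>v n"
  shows "a = b"
proof (rule eq_vecI)
  fix i assume "i < dim_vec b"
  then have "(a - b) $ i = 0" "i < n" using assms by auto
  then show "a $ i = b $ i" using assms(2) by simp
qed (use assms in simp)

text \<open>A solution of \<open>A d = A w\<close> of least norm: its first variation along the kernel vanishes.\<close>

lemma exists_solution_orth_ker:
  fixes A :: "real mat"
  assumes A: "A \<in> carrier_mat r n" and w: "w \<in> carrier_vec n"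
  shows "\<exists>d\<in>carrier_vec n. A *\<^sub>v d = A *\<^sub>v w \<and> orth_ker A n d"
proof -
  define S where "S = {d \<in> carrier_vec n. A *\<^sub>v d = A *\<^sub>v w \<and> d \<bullet> d \<le> w \<bullet> w}"
  have cA: "continuous_vec_map r (\<lambda>f. A *\<^sub>v vec n f)"
    by (rule continuous_vec_map_mult_mat_vec[OF A continuous_vec_map_vec])
  have "{f. vec n f \<in> S \<and> (\<forall>i\<ge>n. f i = 0)} =
      {f. \<forall>i. i < r \<longrightarrow> (A *\<^sub>v vec n f) $ i = (A *\<^sub>v w) $ i} \<inter>
      {f. vec n f \<bullet> vec n f \<le> w \<bullet> w} \<inter> {f. \<forall>i. n \<le> i \<longrightarrow> f i = 0}"
    using A unfolding S_def by (auto simp: vec_eq_iff)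
  moreover have "closed {f. \<forall>i. i < r \<longrightarrow> (A *\<^sub>v vec n f) $ i = (A *\<^sub>v w) $ i}"
    by (rule closed_Collect_bounded_all, rule closed_Collect_eq)
      (use cA in \<open>auto simp: continuous_vec_map_def\<close>)
  moreover have "closed {f. vec n f \<bullet> vec n f \<le> w \<bullet> w}"
    by (rule closed_Collect_le) (auto intro: continuous_on_scalar_prod continuous_vec_map_vec)
  ultimately have closed: "closed {f. vec n f \<in> S \<and> (\<forall>i\<ge>n. f i = 0)}"
    by (simp add: closed_Int closed_Collect_vec_padded)
  have bnd: "\<bar>v $ i\<bar> \<le> sqrt (w \<bullet> w)" if "v \<in> S" "i < n" for v i
    using index_square_le_sprod_self[of v n i] that real_le_rsqrt by (fastforce simp: S_def)
  obtain d where d: "d \<in> S" and dmin: "\<And>u. u \<in> S \<Longrightarrow> d \<bullet> d \<le> u \<bullet> u"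
    using vec_continuous_attains_inf[of S n w "sqrt (w \<bullet> w)", OF _ _ _ bnd closed
        continuous_on_scalar_prod[OF continuous_vec_map_vec continuous_vec_map_vec]]
      w by (auto simp: S_def sprod_self_nonneg)
  then have dn: "d \<in> carrier_vec n" and dA: "A *\<^sub>v d = A *\<^sub>v w"
    by (auto simp: S_def)
  have "d \<bullet> k = 0" if k: "k \<in> carrier_vec n" and Ak: "A *\<^sub>v k = 0\<^sub>v r" for k
  proof -
    have "0 \<le> (2 * (d \<bullet> k)) * t + (k \<bullet> k) * t\<^sup>2" for t
    proof -
      have "A *\<^sub>v (d + t \<cdot>\<^sub>v k) = A *\<^sub>v d + t \<cdot>\<^sub>v (A *\<^sub>v k)"
        by (rule mult_mat_vec_add_smult[OF A dn k])
      also have "\<dots> = A *\<^sub>v w" using dA Ak A w by auto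
      finally have "A *\<^sub>v (d + t \<cdot>\<^sub>v k) = A *\<^sub>v w" .
      then have "d \<bullet> d \<le> (d + t \<cdot>\<^sub>v k) \<bullet> (d + t \<cdot>\<^sub>v k)"
        using dmin[of "d + t \<cdot>\<^sub>v k"] d dn k by (force simp: S_def)
      then show ?thesis by (simp add: sprod_add_smult_self[OF dn k] algebra_simps)
    qed
    then show ?thesis using linear_coeff_eq_0_if_nonneg by fastforce
  qed
  then show ?thesis using A dn dA by (auto simp: orth_ker_def)
qed

lemma closed_padded_unit_orth_ker:
  "closed {f. vec n f \<in> {v \<in> carrier_vec n. v \<bullet> v = 1 \<and> orth_ker A n v} \<and> (\<forall>i\<ge>n. f i = 0)}"
proof -
  have "{f. vec n f \<in> {v \<in> carrier_vec n. v \<bullet> v = 1 \<and> orth_ker A n v} \<and> (\<forall>i\<ge>n. f i = 0)} =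
      {f. vec n f \<bullet> vec n f = 1} \<inter>
      {f. \<forall>k. k \<in> carrier_vec n \<and> A *\<^sub>v k = 0\<^sub>v (dim_row A) \<longrightarrow> vec n f \<bullet> k = 0} \<inter>
      {f. \<forall>i. n \<le> i \<longrightarrow> f i = 0}"
    unfolding orth_ker_def by auto
  moreover have "closed {f. \<forall>k. k \<in> carrier_vec n \<and> A *\<^sub>v k = 0\<^sub>v (dim_row A) \<longrightarrow>
      vec n f \<bullet> k = 0}"
    by (rule closed_Collect_bounded_all, rule closed_Collect_eq)
      (auto intro: continuous_on_scalar_prod[OF continuous_vec_map_vec continuous_vec_map_const])
  moreover have "closed {f::nat\<Rightarrow>real. vec n f \<bullet> vec n f = 1}"
    by (rule closed_Collect_eq)
      (auto intro: continuous_on_scalar_prod[OF continuous_vec_map_vec continuous_vec_map_vec])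
  ultimately show ?thesis by (simp add: closed_Int closed_Collect_vec_padded)
qed

lemma orth_ker_normalize:
  assumes v: "v \<in> carrier_vec n" "v \<noteq> 0\<^sub>v n" "orth_ker A n v"
  shows "((1 / sqrt (v \<bullet> v)) \<cdot>\<^sub>v v) \<bullet> ((1 / sqrt (v \<bullet> v)) \<cdot>\<^sub>v v) = 1"
    and "orth_ker A n ((1 / sqrt (v \<bullet> v)) \<cdot>\<^sub>v v)"
proof -
  have "0 < v \<bullet> v" using sprod_self_pos v by blast
  then show "((1 / sqrt (v \<bullet> v)) \<cdot>\<^sub>v v) \<bullet> ((1 / sqrt (v \<bullet> v)) \<cdot>\<^sub>v v) = 1"
    using v by (simp add: power2_eq_square[symmetric] power_divide)
  show "orth_ker A n ((1 / sqrt (v \<bullet> v)) \<cdot>\<^sub>v v)"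
    using v orth_ker_add_smult[of A n "0\<^sub>v n" v "1 / sqrt (v \<bullet> v)"] by (simp add: orth_ker_def)
qed

lemma exists_rayleigh_minimizer:
  fixes A :: "real mat"
  assumes A: "A \<in> carrier_mat r n" and v1: "v1 \<in> carrier_vec n" "v1 \<noteq> 0\<^sub>v n" "orth_ker A n v1"
  shows "\<exists>v0\<in>carrier_vec n. v0 \<bullet> v0 = 1 \<and> orth_ker A n v0 \<and>
           (\<forall>v\<in>carrier_vec n. orth_ker A n v \<longrightarrow>
              ((A *\<^sub>v v0) \<bullet> (A *\<^sub>v v0)) * (v \<bullet> v) \<le> (A *\<^sub>v v) \<bullet> (A *\<^sub>v v))"
proof -
  define S where "S = {v \<in> carrier_vec n. v \<bullet> v = 1 \<and> orth_ker A n v}"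
  have nrm: "(1 / sqrt (v \<bullet> v)) \<cdot>\<^sub>v v \<in> S"
    if "v \<in> carrier_vec n" "v \<noteq> 0\<^sub>v n" "orth_ker A n v" for v
    using orth_ker_normalize[OF that] that(1) by (simp add: S_def)
  have bnd: "\<bar>v $ i\<bar> \<le> 1" if "v \<in> S" "i < n" for v i
    using index_square_le_sprod_self[of v n i] that by (simp add: S_def abs_square_le_1)
  have cont: "continuous_on UNIV (\<lambda>f. (A *\<^sub>v vec n f) \<bullet> (A *\<^sub>v vec n f))"
    by (rule continuous_on_scalar_prod;
        rule continuous_vec_map_mult_mat_vec[OF A continuous_vec_map_vec])
  obtain v0 where v0: "v0 \<in> S"
    and v0min: "\<And>u. u \<in> S \<Longrightarrow> (A *\<^sub>v v0) \<bullet> (A *\<^sub>v v0) \<le> (A *\<^sub>v u) \<bullet> (A *\<^sub>v u)"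
    using vec_continuous_attains_inf[OF _ nrm[OF v1] _ bnd _ cont] closed_padded_unit_orth_ker
    by (auto simp: S_def)
  have "((A *\<^sub>v v0) \<bullet> (A *\<^sub>v v0)) * (v \<bullet> v) \<le> (A *\<^sub>v v) \<bullet> (A *\<^sub>v v)"
    if v: "v \<in> carrier_vec n" "orth_ker A n v" for v
  proof (cases "v = 0\<^sub>v n")
    case False
    define c where "c = 1 / sqrt (v \<bullet> v)"
    have pos: "0 < v \<bullet> v" using sprod_self_pos v(1) False by blast
    have "(A *\<^sub>v v0) \<bullet> (A *\<^sub>v v0) \<le> (A *\<^sub>v (c \<cdot>\<^sub>v v)) \<bullet> (A *\<^sub>v (c \<cdot>\<^sub>v v))"
      using v0min[OF nrm[OF v(1) False v(2)]] by (simp add: c_def)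
    also have "\<dots> = ((A *\<^sub>v v) \<bullet> (A *\<^sub>v v)) / (v \<bullet> v)"
      using A v pos by (simp add: mult_mat_vec c_def power_divide
          power2_eq_square[symmetric] field_simps)
    finally show ?thesis using pos by (simp add: field_simps)
  qed (simp add: sprod_self_nonneg)
  then show ?thesis using v0 by (auto simp: S_def)
qed

lemma gram_mult_vec_sprod:
  fixes A :: "real mat"
  assumes A: "A \<in> carrier_mat r n" and v: "v \<in> carrier_vec n" and u: "u \<in> carrier_vec n"
  shows "((transpose_mat A * A) *\<^sub>v v) \<bullet> u = (A *\<^sub>v v) \<bullet> (A *\<^sub>v u)"
proof -
  have "(transpose_mat A * A) *\<^sub>v v = transpose_mat A *\<^sub>v (A *\<^sub>v v)"
    using A v by (simp add: assoc_mult_mat_vec[of _ n r _ n])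
  then show ?thesis
    using transpose_vec_mult_scalar[OF A u, of "A *\<^sub>v v"] A v by simp
qed

text \<open>A Rayleigh minimiser is stationary along the complement of the kernel, so the residual
  \<open>A\<^sup>TA v\<^sub>0 - \<mu> v\<^sub>0\<close> is orthogonal both to that complement and to the kernel.\<close>

lemma rayleigh_minimizer_eigenvector:
  fixes A :: "real mat"
  assumes A: "A \<in> carrier_mat r n"
    and v0: "v0 \<in> carrier_vec n" "v0 \<bullet> v0 = 1" "orth_ker A n v0"
    and min: "\<And>v. v \<in> carrier_vec n \<Longrightarrow> orth_ker A n v \<Longrightarrow>
        ((A *\<^sub>v v0) \<bullet> (A *\<^sub>v v0)) * (v \<bullet> v) \<le> (A *\<^sub>v v) \<bullet> (A *\<^sub>v v)"
  shows "(transpose_mat A * A) *\<^sub>v v0 = ((A *\<^sub>v v0) \<bullet> (A *\<^sub>v v0)) \<cdot>\<^sub>v v0"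
proof -
  define \<mu> where "\<mu> = (A *\<^sub>v v0) \<bullet> (A *\<^sub>v v0)"
  define e where "e = (transpose_mat A * A) *\<^sub>v v0 - \<mu> \<cdot>\<^sub>v v0"
  have e: "e \<in> carrier_vec n" using A v0 by (simp add: e_def)
  have e_sprod: "e \<bullet> u = (A *\<^sub>v v0) \<bullet> (A *\<^sub>v u) - \<mu> * (v0 \<bullet> u)" if "u \<in> carrier_vec n" for u
  proof -
    have "e \<bullet> u = ((transpose_mat A * A) *\<^sub>v v0) \<bullet> u - (\<mu> \<cdot>\<^sub>v v0) \<bullet> u"
      unfolding e_def by (rule minus_scalar_prod_distrib) (use A v0 that in auto)
    then show ?thesis using gram_mult_vec_sprod[OF A v0(1) that] v0 that by simp
  qed
  have stationary: "e \<bullet> u = 0" if u: "u \<in> carrier_vec n" "orth_ker A n u" for u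
  proof -
    have Au: "A *\<^sub>v u \<in> carrier_vec r" "A *\<^sub>v v0 \<in> carrier_vec r" using A u v0 by auto
    have "0 \<le> (2 * ((A *\<^sub>v v0) \<bullet> (A *\<^sub>v u)) - 2 * \<mu> * (v0 \<bullet> u)) * t
              + ((A *\<^sub>v u) \<bullet> (A *\<^sub>v u) - \<mu> * (u \<bullet> u)) * t\<^sup>2" for t
    proof -
      have "\<mu> * ((v0 + t \<cdot>\<^sub>v u) \<bullet> (v0 + t \<cdot>\<^sub>v u))
          \<le> (A *\<^sub>v v0 + t \<cdot>\<^sub>v (A *\<^sub>v u)) \<bullet> (A *\<^sub>v v0 + t \<cdot>\<^sub>v (A *\<^sub>v u))"
        using min[of "v0 + t \<cdot>\<^sub>v u"] orth_ker_add_smult[OF v0(3) u(2) v0(1) u(1)] v0 u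
        by (simp add: mult_mat_vec_add_smult[OF A v0(1) u(1)] \<mu>_def)
      then show ?thesis
        unfolding sprod_add_smult_self[OF v0(1) u(1)] sprod_add_smult_self[OF Au(2,1)]
        by (simp add: v0(2) \<mu>_def algebra_simps)
    qed
    then show ?thesis using linear_coeff_eq_0_if_nonneg e_sprod[OF u(1)] by fastforce
  qed
  have "orth_ker A n e"
    using A v0 e_sprod by (auto simp: orth_ker_def)
  then have "e \<bullet> e = 0" using stationary e by blast
  then have "e = 0\<^sub>v n" using sprod_self_eq_0_iff e by blast
  show ?thesis
    by (rule eq_if_minus_vec_eq_0[of _ n]) (use A v0 \<open>e = 0\<^sub>v n\<close> in \<open>simp_all add: e_def \<mu>_def\<close>)
qed

lemma exists_eigenvalue_lower_bound:
  fixes A :: "real mat"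
  assumes A: "A \<in> carrier_mat r n" and Anz: "A \<noteq> 0\<^sub>m r n"
  shows "\<exists>\<mu>>0. eigenvalue (transpose_mat A * A) \<mu> \<and>
          (\<forall>v\<in>carrier_vec n. orth_ker A n v \<longrightarrow> \<mu> * (v \<bullet> v) \<le> (A *\<^sub>v v) \<bullet> (A *\<^sub>v v))"
proof -
  obtain i j where ij: "i < r" "j < n" "A $$ (i, j) \<noteq> 0"
    using A Anz by (metis eq_matI carrier_matD index_zero_mat)
  moreover have "(A *\<^sub>v unit_vec n j) $ i = A $$ (i, j)" using A ij by simp
  ultimately have j: "A *\<^sub>v unit_vec n j \<noteq> 0\<^sub>v r" by auto
  obtain v1 where v1: "v1 \<in> carrier_vec n" "A *\<^sub>v v1 = A *\<^sub>v unit_vec n j" "orth_ker A n v1"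
    using exists_solution_orth_ker[OF A, of "unit_vec n j"] by auto
  have "v1 \<noteq> 0\<^sub>v n"
  proof
    assume "v1 = 0\<^sub>v n"
    then have "A *\<^sub>v v1 = 0\<^sub>v r" using A by (intro eq_vecI) auto
    then show False using v1(2) j by simp
  qed
  then obtain v0 where v0: "v0 \<in> carrier_vec n" "v0 \<bullet> v0 = 1" "orth_ker A n v0"
      and min: "\<forall>v\<in>carrier_vec n. orth_ker A n v \<longrightarrow>
              ((A *\<^sub>v v0) \<bullet> (A *\<^sub>v v0)) * (v \<bullet> v) \<le> (A *\<^sub>v v) \<bullet> (A *\<^sub>v v)"
    using exists_rayleigh_minimizer[OF A v1(1) _ v1(3)] by blast
  define \<mu> where "\<mu> = (A *\<^sub>v v0) \<bullet> (A *\<^sub>v v0)"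
  have "v0 \<noteq> 0\<^sub>v n" using v0(2) by auto
  then have "eigenvalue (transpose_mat A * A) \<mu>"
    using rayleigh_minimizer_eigenvector[OF A v0] min A v0(1)
    by (auto simp: eigenvalue_def eigenvector_def \<mu>_def)
  moreover have "A *\<^sub>v v0 \<noteq> 0\<^sub>v r"
    using v0 A unfolding orth_ker_def by force
  then have "0 < \<mu>" using A v0(1) sprod_self_pos \<mu>_def by (metis mult_mat_vec_carrier)
  ultimately show ?thesis using min \<mu>_def by blast
qed

lemma gram_eigenvalue_nonneg:
  fixes A :: "real mat"
  assumes A: "A \<in> carrier_mat r n" and ev: "eigenvalue (transpose_mat A * A) e"
  shows "0 \<le> e"
proof -
  obtain v where v: "v \<in> carrier_vec n" "v \<noteq> 0\<^sub>v n" "(transpose_mat A * A) *\<^sub>v v = e \<cdot>\<^sub>v v"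
    using ev A unfolding eigenvalue_def eigenvector_def by auto
  then have "e * (v \<bullet> v) = (A *\<^sub>v v) \<bullet> (A *\<^sub>v v)"
    using gram_mult_vec_sprod[OF A v(1) v(1)] by simp
  then show ?thesis
    using sprod_self_nonneg[of "A *\<^sub>v v"] sprod_self_pos[OF v(1,2)]
    by (metis zero_le_mult_iff not_less)
qed

lemma finite_singular_values: "A \<in> carrier_mat r n \<Longrightarrow> finite (singular_values A)"
proof -
  assume A: "A \<in> carrier_mat r n"
  define B where "B = transpose_mat A * A"
  have B: "B \<in> carrier_mat n n" using A by (simp add: B_def)
  have "char_poly B \<noteq> 0" using degree_monic_char_poly[OF B] by auto
  then have "finite {e. poly (char_poly B) e = 0}" by (rule poly_roots_finite)
  then have "finite {e. eigenvalue B e}" using eigenvalue_root_char_poly[OF B] by simp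
  then show ?thesis by (simp add: singular_values_def B_def)
qed

lemma sigma_min_pos_lower_bound:
  fixes A :: "real mat"
  assumes A: "A \<in> carrier_mat r n" and Anz: "A \<noteq> 0\<^sub>m r n"
  shows "0 < sigma_min A \<and>
    (\<forall>v\<in>carrier_vec n. orth_ker A n v \<longrightarrow> (sigma_min A)\<^sup>2 * (v \<bullet> v) \<le> (A *\<^sub>v v) \<bullet> (A *\<^sub>v v))"
proof -
  define SV where "SV = {s \<in> singular_values A. s \<noteq> 0}"
  have fin: "finite SV" using finite_singular_values[OF A] by (simp add: SV_def)
  have pos: "0 < s" if "s \<in> SV" for s
    using that gram_eigenvalue_nonneg[OF A]
    by (auto simp: SV_def singular_values_def order_less_le)
  obtain \<mu> where \<mu>: "0 < \<mu>" "eigenvalue (transpose_mat A * A) \<mu>"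
      "\<And>v. v \<in> carrier_vec n \<Longrightarrow> orth_ker A n v \<Longrightarrow> \<mu> * (v \<bullet> v) \<le> (A *\<^sub>v v) \<bullet> (A *\<^sub>v v)"
    using exists_eigenvalue_lower_bound[OF A Anz] by blast
  then have "sqrt \<mu> \<in> SV" by (auto simp: SV_def singular_values_def)
  then have sig: "sigma_min A \<in> SV" "sigma_min A \<le> sqrt \<mu>"
    using fin by (auto simp: sigma_min_def SV_def[symmetric] intro: Min_in Min_le)
  then have "(sigma_min A)\<^sup>2 \<le> \<mu>"
    using pos \<mu>(1) by (metis less_eq_real_def power_mono real_sqrt_pow2)
  then have "(sigma_min A)\<^sup>2 * (v \<bullet> v) \<le> (A *\<^sub>v v) \<bullet> (A *\<^sub>v v)"
    if "v \<in> carrier_vec n" "orth_ker A n v" for v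
    using \<mu>(3)[OF that] mult_right_mono[OF _ sprod_self_nonneg[of v]] by fastforce
  then show ?thesis using pos[OF sig(1)] by blast
qed

lemma sigma_min_solution:
  fixes A :: "real mat"
  assumes A: "A \<in> carrier_mat r n" and Anz: "A \<noteq> 0\<^sub>m r n" and w: "w \<in> carrier_vec n"
  shows "\<exists>d\<in>carrier_vec n. A *\<^sub>v d = A *\<^sub>v w \<and> sigma_min A * norm2 d \<le> norm2 (A *\<^sub>v w)"
proof -
  obtain d where d: "d \<in> carrier_vec n" "A *\<^sub>v d = A *\<^sub>v w" "orth_ker A n d"
    using exists_solution_orth_ker[OF A w] by blast
  have "(sigma_min A)\<^sup>2 * (d \<bullet> d) \<le> (A *\<^sub>v w) \<bullet> (A *\<^sub>v w)" and pos: "0 < sigma_min A"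
    using sigma_min_pos_lower_bound[OF A Anz] d by auto
  then have "sqrt ((sigma_min A)\<^sup>2 * (d \<bullet> d)) \<le> norm2 (A *\<^sub>v w)"
    by (simp add: norm2_eq_sqrt_sprod)
  then show ?thesis using d pos by (auto simp: norm2_eq_sqrt_sprod real_sqrt_mult)
qed

section \<open>Blocks of the variable\<close>

lemma off_Suc: "off n (Suc l) = off n l + n l"
  unfolding off_def by simp

lemma off_mono: "k \<le> l \<Longrightarrow> off n k \<le> off n l"
  unfolding off_def by (rule sum_mono2) auto

lemma off_add_le_tot_dim: "l \<le> L \<Longrightarrow> off n l + n l \<le> tot_dim n L"
proof -
  assume "l \<le> L"
  have "off n l + n l = (\<Sum>k\<le>l. n k)"
    unfolding off_def by (simp add: lessThan_Suc_atMost[symmetric])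
  also have "\<dots> \<le> tot_dim n L"
    unfolding tot_dim_def using \<open>l \<le> L\<close> by (intro sum_mono2) auto
  finally show ?thesis .
qed

lemma blk_carrier [simp]: "blk n l x \<in> carrier_vec (n l)"
  unfolding blk_def by simp

lemma emb_carrier [simp]: "emb n L l d \<in> carrier_vec (tot_dim n L)"
  unfolding emb_def by simp

lemma dim_emb [simp]: "dim_vec (emb n L l d) = tot_dim n L"
  unfolding emb_def by simp

lemma blk_add_smult_emb_same:
  assumes x: "x \<in> carrier_vec (tot_dim n L)" and l: "l \<le> L" and d: "d \<in> carrier_vec (n l)"
  shows "blk n l (x + t \<cdot>\<^sub>v emb n L l d) = blk n l x + t \<cdot>\<^sub>v d"
proof (rule eq_vecI)
  fix j assume "j < dim_vec (blk n l x + t \<cdot>\<^sub>v d)"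
  then have "j < n l" "off n l + j < tot_dim n L"
    using d off_add_le_tot_dim[OF l, of n] by (auto simp: blk_def)
  then show "blk n l (x + t \<cdot>\<^sub>v emb n L l d) $ j = (blk n l x + t \<cdot>\<^sub>v d) $ j"
    using x d by (simp add: blk_def emb_def)
qed (use d in \<open>simp add: blk_def\<close>)

lemma blk_add_smult_emb_other:
  assumes x: "x \<in> carrier_vec (tot_dim n L)" and k: "k \<le> L" "k \<noteq> l"
  shows "blk n k (x + t \<cdot>\<^sub>v emb n L l d) = blk n k x"
proof (rule eq_vecI)
  fix j assume "j < dim_vec (blk n k x)"
  then have j: "j < n k" and lt: "off n k + j < tot_dim n L"
    using off_add_le_tot_dim[OF k(1), of n] by (auto simp: blk_def)
  have out: "\<not> (off n l \<le> off n k + j \<and> off n k + j < off n l + n l)"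
  proof (cases "k < l")
    case True
    then show ?thesis using j off_mono[of "Suc k" l n] off_Suc[of n k] by simp
  next
    case False
    then show ?thesis using k(2) off_mono[of "Suc l" k n] off_Suc[of n l] by simp
  qed
  have "emb n L l d $ (off n k + j) = 0"
    unfolding emb_def using lt out by (subst index_vec) auto
  then show "blk n k (x + t \<cdot>\<^sub>v emb n L l d) $ j = blk n k x $ j"
    using j lt x by (simp add: blk_def carrier_vecD)
qed (simp add: blk_def)

lemma emb_smult: "d \<in> carrier_vec (n l) \<Longrightarrow> emb n L l (s \<cdot>\<^sub>v d) = s \<cdot>\<^sub>v emb n L l d"
  by (rule eq_vecI) (auto simp: emb_def)

lemma sum_blk_add_smult_emb:
  fixes F :: "nat \<Rightarrow> real vec \<Rightarrow> real"
  assumes x: "x \<in> carrier_vec (tot_dim n L)" and l: "l \<in> {1..L}"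
  shows "(\<Sum>k\<in>{1..L}. F k (blk n k (x + t \<cdot>\<^sub>v emb n L l d))) =
    (\<Sum>k\<in>{1..L}. F k (blk n k x)) - F l (blk n l x) + F l (blk n l (x + t \<cdot>\<^sub>v emb n L l d))"
proof -
  have "(\<Sum>k\<in>{1..L} - {l}. F k (blk n k (x + t \<cdot>\<^sub>v emb n L l d))) =
      (\<Sum>k\<in>{1..L} - {l}. F k (blk n k x))"
    using blk_add_smult_emb_other[OF x] by (intro sum.cong) auto
  then show ?thesis
    using l sum.remove[of "{1..L}" l "\<lambda>k. F k (blk n k x)"]
      sum.remove[of "{1..L}" l "\<lambda>k. F k (blk n k (x + t \<cdot>\<^sub>v emb n L l d))"]
    by simp
qed

lemma objective_add_smult_emb:
  assumes x: "x \<in> carrier_vec (tot_dim n L)" and l: "l \<in> {1..L}" and d: "d \<in> carrier_vec (n l)"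
  shows "objective L n m p K \<gamma> c D f (x + t \<cdot>\<^sub>v emb n L l d) - objective L n m p K \<gamma> c D f x =
    (f (x + t \<cdot>\<^sub>v emb n L l d) - f x) +
    \<gamma> l * (trimmed (K l) (m l) (p l) (D l *\<^sub>v (blk n l x + t \<cdot>\<^sub>v d) - c l)
           - trimmed (K l) (m l) (p l) (D l *\<^sub>v blk n l x - c l))"
proof -
  have "l \<le> L" using l by simp
  show ?thesis unfolding objective_def
    sum_blk_add_smult_emb[OF x l, of "\<lambda>k v. \<gamma> k * trimmed (K k) (m k) (p k) (D k *\<^sub>v v - c k)"]
    blk_add_smult_emb_same[OF x \<open>l \<le> L\<close> d] by (simp add: algebra_simps)
qed

section \<open>Directional derivatives\<close>

lemma dir_deriv_eq: "has_dir_deriv h x d D \<Longrightarrow> dir_deriv h x d = D"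
  unfolding has_dir_deriv_def dir_deriv_def by (rule tendsto_Lim) simp_all

lemma has_dir_deriv_smult:
  assumes h: "has_dir_deriv h x d D" and s: "0 < s"
  shows "has_dir_deriv h x (s \<cdot>\<^sub>v d) (s * D)"
proof -
  define q where "q = (\<lambda>t. (h (x + t \<cdot>\<^sub>v d) - h x) / t)"
  have "((\<lambda>t::real. s * t) \<longlongrightarrow> 0) (at_right 0)"
    using tendsto_mult_left[of "\<lambda>t. t" 0 "at_right 0" s] by (simp add: tendsto_ident_at)
  moreover have "\<forall>\<^sub>F t in at_right 0. s * t \<in> {0<..} \<and> s * t \<noteq> 0"
    using s by (intro eventually_at_rightI[of 0 1]) auto
  ultimately have "filterlim (\<lambda>t::real. s * t) (at_right 0) (at_right 0)"
    unfolding filterlim_at by blast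
  with h have "((\<lambda>t. q (s * t)) \<longlongrightarrow> D) (at_right 0)"
    unfolding has_dir_deriv_def q_def by (rule filterlim_compose)
  then have "((\<lambda>t. s * q (s * t)) \<longlongrightarrow> s * D) (at_right 0)"
    by (rule tendsto_mult_left)
  moreover have "\<forall>\<^sub>F t in at_right 0. s * q (s * t) = (h (x + t \<cdot>\<^sub>v (s \<cdot>\<^sub>v d)) - h x) / t"
    using s by (intro eventually_at_rightI[of 0 1]) (auto simp: q_def smult_smult_assoc mult.commute)
  ultimately show ?thesis
    unfolding has_dir_deriv_def by (rule Lim_transform_eventually)
qed

lemma has_dir_deriv_add_linear:
  assumes g: "has_dir_deriv g x e Dg" and \<delta>: "0 < \<delta>"
    and eq: "\<And>t. 0 < t \<Longrightarrow> t \<le> \<delta> \<Longrightarrow> h (x + t \<cdot>\<^sub>v e) - h x = g (x + t \<cdot>\<^sub>v e) - g x + a * t"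
  shows "has_dir_deriv h x e (Dg + a)"
proof -
  have "((\<lambda>t. (g (x + t \<cdot>\<^sub>v e) - g x) / t + a) \<longlongrightarrow> Dg + a) (at_right 0)"
    using g unfolding has_dir_deriv_def by (intro tendsto_intros)
  moreover have "\<forall>\<^sub>F t in at_right 0.
      (g (x + t \<cdot>\<^sub>v e) - g x) / t + a = (h (x + t \<cdot>\<^sub>v e) - h x) / t"
    using \<delta> by (intro eventually_at_rightI[of 0 \<delta>]) (auto simp: eq add_divide_distrib)
  ultimately show ?thesis
    unfolding has_dir_deriv_def by (rule Lim_transform_eventually)
qed

lemma has_dir_deriv_le:
  assumes F: "has_dir_deriv F x e DF" and G: "has_dir_deriv G x e DG" and \<delta>: "0 < \<delta>"
    and le: "\<And>t. 0 < t \<Longrightarrow> t \<le> \<delta> \<Longrightarrow> F (x + t \<cdot>\<^sub>v e) - F x \<le> G (x + t \<cdot>\<^sub>v e) - G x + C * t"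
  shows "DF \<le> DG + C"
proof -
  have "((\<lambda>t. (F (x + t \<cdot>\<^sub>v e) - F x) / t - (G (x + t \<cdot>\<^sub>v e) - G x) / t) \<longlongrightarrow> DF - DG)
      (at_right 0)"
    using F G unfolding has_dir_deriv_def by (intro tendsto_intros)
  moreover have "\<forall>\<^sub>F t in at_right 0.
      (F (x + t \<cdot>\<^sub>v e) - F x) / t - (G (x + t \<cdot>\<^sub>v e) - G x) / t \<le> C"
  proof (rule eventually_at_rightI[of 0 \<delta>])
    fix t assume "t \<in> {0<..<\<delta>}"
    then show "(F (x + t \<cdot>\<^sub>v e) - F x) / t - (G (x + t \<cdot>\<^sub>v e) - G x) / t \<le> C"
      using le[of t] by (simp add: diff_divide_distrib[symmetric] pos_divide_le_eq algebra_simps)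
  qed (use \<delta> in simp)
  ultimately have "DF - DG \<le> C" by (rule tendsto_upperbound) simp
  then show ?thesis by simp
qed

lemma dir_deriv_emb_le_norm2:
  assumes diff: "dir_differentiable (tot_dim n L) f" and x: "x \<in> carrier_vec (tot_dim n L)"
    and bound: "\<forall>d\<in>carrier_vec (n l). norm2 d = 1 \<longrightarrow> dir_deriv f x (emb n L l d) \<le> \<Gamma>"
    and d: "d \<in> carrier_vec (n l)" "d \<noteq> 0\<^sub>v (n l)"
    and Df: "has_dir_deriv f x (emb n L l d) Df"
  shows "Df \<le> norm2 d * \<Gamma>"
proof -
  define d' where "d' = (1 / norm2 d) \<cdot>\<^sub>v d"
  have pos: "0 < norm2 d" using sprod_self_pos[OF d] by (simp add: norm2_eq_sqrt_sprod)
  have d': "d' \<in> carrier_vec (n l)" "norm2 d' = 1"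
    using d pos by (auto simp: d'_def norm2_eq_sqrt_sprod real_sqrt_mult real_sqrt_divide)
  obtain D' where D': "has_dir_deriv f x (emb n L l d') D'"
    using diff x unfolding dir_differentiable_def by (meson emb_carrier)
  have "emb n L l d = norm2 d \<cdot>\<^sub>v emb n L l d'"
    using d pos by (simp add: d'_def emb_smult[symmetric] smult_smult_assoc)
  then have "Df = norm2 d * D'"
    using dir_deriv_eq[OF has_dir_deriv_smult[OF D' pos]] dir_deriv_eq[OF Df] by simp
  moreover have "D' \<le> \<Gamma>" using bound d' dir_deriv_eq[OF D'] by auto
  ultimately show ?thesis using pos by simp
qed

section \<open>The trimmed norm and block rows\<close>

lemma bnorm_nonneg: "0 \<le> bnorm p z i"
  unfolding bnorm_def by (simp add: sum_nonneg)

lemma bnorm_1: "bnorm 1 z i = \<bar>z $ i\<bar>"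
  unfolding bnorm_def by simp

lemma finite_trimmed_supports: "finite {\<Lambda>::nat set. \<Lambda> \<subseteq> {..<m} \<and> card \<Lambda> = m - K}"
  by (rule finite_subset[of _ "Pow {..<m}"]) auto

lemma trimmed_le:
  assumes "\<Lambda> \<subseteq> {..<m}" "card \<Lambda> = m - K"
  shows "trimmed K m p z \<le> (\<Sum>i\<in>\<Lambda>. bnorm p z i)"
  unfolding trimmed_def by (rule Min_le) (use finite_trimmed_supports assms in auto)

lemma trimmed_attained:
  obtains \<Lambda> where "\<Lambda> \<subseteq> {..<m}" "card \<Lambda> = m - K" "trimmed K m p z = (\<Sum>i\<in>\<Lambda>. bnorm p z i)"
proof -
  have w: "{..<m - K} \<in> {\<Lambda>. \<Lambda> \<subseteq> {..<m} \<and> card \<Lambda> = m - K}" by auto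
  have "trimmed K m p z \<in> (\<lambda>\<Lambda>. \<Sum>i\<in>\<Lambda>. bnorm p z i) ` {\<Lambda>. \<Lambda> \<subseteq> {..<m} \<and> card \<Lambda> = m - K}"
    unfolding trimmed_def by (rule Min_in) (use finite_trimmed_supports in simp, use w in blast)
  then show ?thesis using that by auto
qed

lemma trimmed_nonneg: "0 \<le> trimmed K m p z"
  by (metis trimmed_attained bnorm_nonneg sum_nonneg)

lemma less_mult_if_div_mem:
  fixes r p m :: nat
  assumes "1 \<le> p" "\<Lambda> \<subseteq> {..<m}" "r div p \<in> \<Lambda>"
  shows "r < m * p"
  using assms div_less_iff_less_mult[of p r m] by auto

lemma finite_block_row_indices:
  fixes p m :: nat
  assumes "1 \<le> p" "\<Lambda> \<subseteq> {..<m}"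
  shows "finite {r. r div p \<in> \<Lambda>}"
  by (rule finite_subset[of _ "{..<m * p}"]) (use assms less_mult_if_div_mem in auto)

lemma pick_bij_betw:
  assumes "finite R"
  shows "bij_betw (pick R) {..<card R} R"
proof (rule bij_betwI')
  fix a b assume a: "a \<in> {..<card R}" and b: "b \<in> {..<card R}"
  show "(pick R a = pick R b) = (a = b)"
  proof
    assume "pick R a = pick R b"
    then have "card {x\<in>R. x < pick R a} = card {x\<in>R. x < pick R b}" by simp
    then show "a = b" using card_pick_le[of a R] card_pick_le[of b R] a b by simp
  qed simp
next
  fix a assume "a \<in> {..<card R}"
  then show "pick R a \<in> R" using pick_in_set_le by auto
next
  fix r assume r: "r \<in> R"
  have "{x\<in>R. x < r} \<subset> R" using r by auto
  then have "card {x\<in>R. x < r} < card R" by (rule psubset_card_mono[OF assms])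
  then show "\<exists>a\<in>{..<card R}. r = pick R a" using pick_card_in_set[OF r] by force
qed

lemma sum_block_row_indices:
  fixes p :: nat
  assumes p: "1 \<le> p" and \<Lambda>: "\<Lambda> \<subseteq> {..<m}"
  shows "(\<Sum>r | r div p \<in> \<Lambda>. h r) = (\<Sum>i\<in>\<Lambda>. \<Sum>j<p. h (i * p + j))"
proof -
  have inj: "inj_on (\<lambda>(i, j). i * p + j) (\<Lambda> \<times> {..<p})"
  proof (rule inj_onI, clarify)
    fix i j i' j' assume j: "j < p" "j' < p" and eq: "i * p + j = i' * p + j'"
    have "(i * p + j) div p = i" "(i * p + j) mod p = j"
         "(i' * p + j') div p = i'" "(i' * p + j') mod p = j'"
      using j by auto
    then show "i = i' \<and> j = j'" using eq by metis
  qed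
  have "(\<lambda>(i, j). i * p + j) ` (\<Lambda> \<times> {..<p}) = {r. r div p \<in> \<Lambda>}"
  proof (intro equalityI subsetI)
    fix r assume "r \<in> {r. r div p \<in> \<Lambda>}"
    moreover have "r = r div p * p + r mod p" "r mod p < p" using p by simp_all
    ultimately show "r \<in> (\<lambda>(i, j). i * p + j) ` (\<Lambda> \<times> {..<p})" by force
  qed (use p in auto)
  then have "(\<Sum>r | r div p \<in> \<Lambda>. h r) = (\<Sum>(i, j)\<in>\<Lambda> \<times> {..<p}. h (i * p + j))"
    using sum.reindex[OF inj, of h] by (simp add: case_prod_beta' o_def)
  then show ?thesis by (simp add: sum.cartesian_product)
qed

lemma block_rows_carrier:
  assumes "D \<in> carrier_mat (m * p) N" "1 \<le> p" "\<Lambda> \<subseteq> {..<m}"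
  shows "block_rows p D \<Lambda> \<in> carrier_mat (card {r. r div p \<in> \<Lambda>}) N"
proof -
  have "{i. i < dim_row D \<and> i \<in> {r. r div p \<in> \<Lambda>}} = {r. r div p \<in> \<Lambda>}"
    using assms less_mult_if_div_mem[OF assms(2,3)] by auto
  moreover have "{j. j < dim_col D \<and> j \<in> UNIV} = {..<N}" using assms(1) by auto
  ultimately show ?thesis
    unfolding block_rows_def carrier_mat_def by (simp add: dim_submatrix)
qed

text \<open>Row \<open>k\<close> of \<open>(D)\<^sub>\<Lambda>\<close> is row \<open>pick R k\<close> of \<open>D\<close>, the \<open>k\<close>-th smallest
  element of the row index set \<open>R\<close> of the blocks in \<open>\<Lambda>\<close>.\<close>

lemma block_rows_mult_vec:
  assumes D: "D \<in> carrier_mat (m * p) N" and p: "1 \<le> p" and \<Lambda>: "\<Lambda> \<subseteq> {..<m}"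
    and v: "v \<in> carrier_vec N"
  shows "block_rows p D \<Lambda> *\<^sub>v v =
    vec (card {r. r div p \<in> \<Lambda>}) (\<lambda>k. (D *\<^sub>v v) $ pick {r. r div p \<in> \<Lambda>} k)"
proof (rule eq_vecI)
  let ?R = "{r. r div p \<in> \<Lambda>}"
  have A: "block_rows p D \<Lambda> \<in> carrier_mat (card ?R) N"
    by (rule block_rows_carrier[OF D p \<Lambda>])
  have rows: "{i. i < dim_row D \<and> i \<in> ?R} = ?R"
    using D less_mult_if_div_mem[OF p \<Lambda>] by auto
  fix k assume "k < dim_vec (vec (card ?R) (\<lambda>k. (D *\<^sub>v v) $ pick ?R k))"
  then have k: "k < card ?R" by simp
  then have "pick ?R k < m * p"
    using pick_in_set_le[OF k] less_mult_if_div_mem[OF p \<Lambda>] by auto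
  moreover have "block_rows p D \<Lambda> $$ (k, j) = D $$ (pick ?R k, j)" if "j < N" for j
    unfolding block_rows_def using D k that rows
    by (subst submatrix_index) (auto simp: pick_UNIV)
  ultimately show "(block_rows p D \<Lambda> *\<^sub>v v) $ k = vec (card ?R) (\<lambda>k. (D *\<^sub>v v) $ pick ?R k) $ k"
    using A D v k by (simp add: scalar_prod_def)
qed (use block_rows_carrier[OF D p \<Lambda>] in simp)

section \<open>Descent directions\<close>

lemma L2_set_block_rows_le_sum_bnorm:
  fixes p m :: nat
  assumes "1 \<le> p" "\<Lambda> \<subseteq> {..<m}"
  shows "L2_set (\<lambda>r. z $ r) {r. r div p \<in> \<Lambda>} \<le> (\<Sum>i\<in>\<Lambda>. bnorm p z i)"
proof -
  have "L2_set (\<lambda>r. z $ r) {r. r div p \<in> \<Lambda>} = L2_set (bnorm p z) \<Lambda>"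
    by (simp add: L2_set_def sum_block_row_indices[OF assms] bnorm_def sum_nonneg)
  also have "\<dots> \<le> (\<Sum>i\<in>\<Lambda>. bnorm p z i)"
    by (rule L2_set_le_sum) (rule bnorm_nonneg)
  finally show ?thesis .
qed

lemma norm2_mult_vec_block_rows:
  assumes D: "D \<in> carrier_mat (m * p) N" and p: "1 \<le> p" and \<Lambda>: "\<Lambda> \<subseteq> {..<m}"
    and v: "v \<in> carrier_vec N"
  shows "norm2 (block_rows p D \<Lambda> *\<^sub>v v) = L2_set (\<lambda>r. (D *\<^sub>v v) $ r) {r. r div p \<in> \<Lambda>}"
  using sum.reindex_bij_betw[OF pick_bij_betw[OF finite_block_row_indices[OF p \<Lambda>]],
      of "\<lambda>r. ((D *\<^sub>v v) $ r)\<^sup>2"]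
  by (simp add: norm2_def L2_set_def block_rows_mult_vec[OF D p \<Lambda> v])

lemma mult_vec_eq_block_rows_index:
  assumes D: "D \<in> carrier_mat (m * p) N" and p: "1 \<le> p" and \<Lambda>: "\<Lambda> \<subseteq> {..<m}"
    and v: "v \<in> carrier_vec N" and r: "r \<in> {r. r div p \<in> \<Lambda>}"
  shows "(D *\<^sub>v v) $ r = (block_rows p D \<Lambda> *\<^sub>v v) $ card {a \<in> {r. r div p \<in> \<Lambda>}. a < r}"
proof -
  let ?R = "{r. r div p \<in> \<Lambda>}"
  have "{a\<in>?R. a < r} \<subset> ?R" using r by auto
  then have "card {a\<in>?R. a < r} < card ?R"
    by (rule psubset_card_mono[OF finite_block_row_indices[OF p \<Lambda>]])
  then show ?thesis
    using pick_card_in_set[OF r] by (simp add: block_rows_mult_vec[OF D p \<Lambda> v])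
qed

lemma descent_direction_surjective:
  assumes D: "D \<in> carrier_mat (m * p) N" "D \<noteq> 0\<^sub>m (m * p) N" "surjective_mat D"
    and p: "1 \<le> p" and \<Lambda>: "\<Lambda> \<subseteq> {..<m}" and z: "z \<in> carrier_vec (m * p)"
  shows "\<exists>d\<in>carrier_vec N. (\<forall>r. r div p \<in> \<Lambda> \<longrightarrow> (D *\<^sub>v d) $ r = - z $ r) \<and>
    sigma_min D * norm2 d \<le> L2_set (\<lambda>r. z $ r) {r. r div p \<in> \<Lambda>}"
proof -
  let ?R = "{r. r div p \<in> \<Lambda>}"
  define y where "y = vec (m * p) (\<lambda>r. if r \<in> ?R then - z $ r else 0)"
  have y: "y \<in> carrier_vec (m * p)" by (simp add: y_def)
  obtain u where u: "u \<in> carrier_vec N" "D *\<^sub>v u = y"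
    using D y unfolding surjective_mat_def by auto
  obtain d where d: "d \<in> carrier_vec N" "D *\<^sub>v d = y" "sigma_min D * norm2 d \<le> norm2 y"
    using sigma_min_solution[OF D(1,2) u(1)] u(2) by auto
  have sub: "?R \<subseteq> {..<m * p}" using less_mult_if_div_mem[OF p \<Lambda>] by auto
  have "(\<Sum>r<m * p. (y $ r)\<^sup>2) = (\<Sum>r<m * p. if r \<in> ?R then (z $ r)\<^sup>2 else 0)"
    by (rule sum.cong) (auto simp: y_def)
  also have "\<dots> = (\<Sum>r\<in>{r\<in>{..<m * p}. r \<in> ?R}. (z $ r)\<^sup>2)"
    by (rule sum.inter_filter[symmetric]) simp
  also have "{r\<in>{..<m * p}. r \<in> ?R} = ?R" using sub by blast
  finally have "(\<Sum>r<m * p. (y $ r)\<^sup>2) = (\<Sum>r\<in>?R. (z $ r)\<^sup>2)" .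
  then have "norm2 y = L2_set (\<lambda>r. z $ r) ?R"
    by (simp add: norm2_def L2_set_def y_def)
  moreover have "(D *\<^sub>v d) $ r = - z $ r" if "r \<in> ?R" for r
    using d(2) that \<open>?R \<subseteq> {..<m * p}\<close> by (auto simp: y_def)
  ultimately show ?thesis using d by auto
qed

lemma descent_direction_block_rows:
  assumes D: "D \<in> carrier_mat (m * p) N" and p: "1 \<le> p" and \<Lambda>: "\<Lambda> \<subseteq> {..<m}"
    and u: "u \<in> carrier_vec N" and z: "z \<in> carrier_vec (m * p)" and Du: "D *\<^sub>v u = - z"
    and nz: "\<exists>r. r div p \<in> \<Lambda> \<and> z $ r \<noteq> 0"
  shows "nonzero_mat (block_rows p D \<Lambda>) \<and>
    (\<exists>d\<in>carrier_vec N. (\<forall>r. r div p \<in> \<Lambda> \<longrightarrow> (D *\<^sub>v d) $ r = - z $ r) \<and>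
       sigma_min (block_rows p D \<Lambda>) * norm2 d \<le> L2_set (\<lambda>r. z $ r) {r. r div p \<in> \<Lambda>})"
proof -
  let ?R = "{r. r div p \<in> \<Lambda>}" and ?A = "block_rows p D \<Lambda>"
  have A: "?A \<in> carrier_mat (card ?R) N" by (rule block_rows_carrier[OF D p \<Lambda>])
  have R: "r < m * p" if "r \<in> ?R" for r using less_mult_if_div_mem[OF p \<Lambda>] that by auto
  have agree: "(D *\<^sub>v v) $ r = (D *\<^sub>v v') $ r"
    if "v \<in> carrier_vec N" "v' \<in> carrier_vec N" "?A *\<^sub>v v = ?A *\<^sub>v v'" "r \<in> ?R" for v v' r
    using that by (simp add: mult_vec_eq_block_rows_index[OF D p \<Lambda>])
  have L2: "norm2 (?A *\<^sub>v u) = L2_set (\<lambda>r. z $ r) ?R"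
    using norm2_mult_vec_block_rows[OF D p \<Lambda> u] Du z R by (simp add: L2_set_def)
  have "?A *\<^sub>v u \<noteq> 0\<^sub>v (card ?R)"
  proof
    assume "?A *\<^sub>v u = 0\<^sub>v (card ?R)"
    then have "L2_set (\<lambda>r. z $ r) ?R = 0" using L2 by (simp add: norm2_def)
    then show False
      using nz finite_block_row_indices[OF p \<Lambda>] by (auto simp: L2_set_eq_0_iff)
  qed
  then have Anz: "?A \<noteq> 0\<^sub>m (card ?R) N" using u by auto
  obtain d where d: "d \<in> carrier_vec N" "?A *\<^sub>v d = ?A *\<^sub>v u"
      "sigma_min ?A * norm2 d \<le> norm2 (?A *\<^sub>v u)"
    using sigma_min_solution[OF A Anz u] by blast
  have "(D *\<^sub>v d) $ r = - z $ r" if "r \<in> ?R" for r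
    using agree[OF d(1) u d(2) that] Du z R[OF that] by simp
  then show ?thesis using d L2 Anz A by (auto simp: nonzero_mat_def)
qed

lemma sigma_K_pos_le_block_rows:
  assumes D: "D \<in> carrier_mat (m * p) N" and p: "1 \<le> p" and ns: "\<not> surjective_mat D"
    and \<Lambda>: "\<Lambda> \<subseteq> {..<m}" "card \<Lambda> = m - K" and nz: "nonzero_mat (block_rows p D \<Lambda>)"
  shows "0 < sigma_K K m p D \<and> sigma_K K m p D \<le> sigma_min (block_rows p D \<Lambda>)"
proof -
  define SS where "SS = {sigma_min (block_rows p D \<Lambda>') | \<Lambda>'.
      \<Lambda>' \<subseteq> {..<m} \<and> card \<Lambda>' = m - K \<and> nonzero_mat (block_rows p D \<Lambda>')}"
  have "SS \<subseteq> (\<lambda>\<Lambda>'. sigma_min (block_rows p D \<Lambda>')) ` {\<Lambda>'. \<Lambda>' \<subseteq> {..<m} \<and> card \<Lambda>' = m - K}"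
    unfolding SS_def by auto
  then have fin: "finite SS" using finite_trimmed_supports finite_surj by blast
  have mem: "sigma_min (block_rows p D \<Lambda>) \<in> SS" unfolding SS_def using \<Lambda> nz by blast
  have pos: "0 < s" if "s \<in> SS" for s
  proof -
    obtain \<Lambda>' where s: "s = sigma_min (block_rows p D \<Lambda>')" "\<Lambda>' \<subseteq> {..<m}"
        "nonzero_mat (block_rows p D \<Lambda>')"
      using \<open>s \<in> SS\<close> unfolding SS_def by blast
    show ?thesis
      using s block_rows_carrier[OF D p s(2)] sigma_min_pos_lower_bound
      by (auto simp: nonzero_mat_def)
  qed
  have "sigma_K K m p D = Min SS" using ns by (simp add: sigma_K_def SS_def)
  moreover have "Min SS \<in> SS" using fin mem by (intro Min_in) auto
  ultimately show ?thesis using pos Min_le[OF fin mem] by auto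
qed

lemma exists_descent_direction:
  assumes D: "D \<in> carrier_mat (m * p) N" "D \<noteq> 0\<^sub>m (m * p) N" and p: "1 \<le> p"
    and \<Lambda>: "\<Lambda> \<subseteq> {..<m}" "card \<Lambda> = m - K"
    and u: "u \<in> carrier_vec N" and z: "z \<in> carrier_vec (m * p)" and Du: "D *\<^sub>v u = - z"
    and nz: "\<exists>r. r div p \<in> \<Lambda> \<and> z $ r \<noteq> 0"
  shows "\<exists>d\<in>carrier_vec N. (\<forall>r. r div p \<in> \<Lambda> \<longrightarrow> (D *\<^sub>v d) $ r = - z $ r) \<and>
    0 < sigma_K K m p D \<and> sigma_K K m p D * norm2 d \<le> L2_set (\<lambda>r. z $ r) {r. r div p \<in> \<Lambda>}"
proof (cases "surjective_mat D")
  case True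
  then show ?thesis
    using descent_direction_surjective[OF D True p \<Lambda>(1) z] sigma_min_pos_lower_bound[OF D]
    by (simp add: sigma_K_def)
next
  case False
  obtain d where d: "d \<in> carrier_vec N" "\<forall>r. r div p \<in> \<Lambda> \<longrightarrow> (D *\<^sub>v d) $ r = - z $ r"
      "sigma_min (block_rows p D \<Lambda>) * norm2 d \<le> L2_set (\<lambda>r. z $ r) {r. r div p \<in> \<Lambda>}"
    and nzA: "nonzero_mat (block_rows p D \<Lambda>)"
    using descent_direction_block_rows[OF D(1) p \<Lambda>(1) u z Du nz] by blast
  have "0 < sigma_K K m p D" "sigma_K K m p D \<le> sigma_min (block_rows p D \<Lambda>)"
    using sigma_K_pos_le_block_rows[OF D(1) p False \<Lambda> nzA] by auto
  then have "sigma_K K m p D * norm2 d \<le> sigma_min (block_rows p D \<Lambda>) * norm2 d"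
    by (simp add: mult_right_mono norm2_nonneg)
  then show ?thesis using d \<open>0 < sigma_K K m p D\<close> by fastforce
qed

text \<open>Moving towards a vector that cancels the blocks in \<open>\<Lambda>\<close> shrinks each of them by the
  factor \<open>1 - t\<close>, while the trimmed norm is at most the sum over \<open>\<Lambda>\<close>.\<close>

lemma trimmed_add_smult_le:
  assumes p: "1 \<le> p" and \<Lambda>: "\<Lambda> \<subseteq> {..<m}" "card \<Lambda> = m - K"
    and z: "z \<in> carrier_vec (m * p)" and v: "v \<in> carrier_vec (m * p)"
    and vz: "\<forall>r. r div p \<in> \<Lambda> \<longrightarrow> v $ r = - z $ r" and t: "0 \<le> t" "t \<le> 1"
  shows "trimmed K m p (z + t \<cdot>\<^sub>v v) \<le> (1 - t) * (\<Sum>i\<in>\<Lambda>. bnorm p z i)"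
proof -
  have "bnorm p (z + t \<cdot>\<^sub>v v) i = (1 - t) * bnorm p z i" if i: "i \<in> \<Lambda>" for i
  proof -
    have "(z + t \<cdot>\<^sub>v v) $ (i * p + j) = (1 - t) * z $ (i * p + j)" if "j < p" for j
    proof -
      have "(i * p + j) div p = i" using that by simp
      then show ?thesis
        using i z v vz less_mult_if_div_mem[OF p \<Lambda>(1), of "i * p + j"] by (simp add: algebra_simps)
    qed
    then show ?thesis
      using t by (simp add: bnorm_def power_mult_distrib sum_distrib_left[symmetric] real_sqrt_mult)
  qed
  then have "(\<Sum>i\<in>\<Lambda>. bnorm p (z + t \<cdot>\<^sub>v v) i) = (1 - t) * (\<Sum>i\<in>\<Lambda>. bnorm p z i)"
    by (simp add: sum_distrib_left)
  then show ?thesis using trimmed_le[OF \<Lambda>] by metis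
qed

lemma exists_trimmed_descent_direction:
  assumes D: "D \<in> carrier_mat (m * p) N" "D \<noteq> 0\<^sub>m (m * p) N" and p: "1 \<le> p"
    and u: "u \<in> carrier_vec N" and z: "z \<in> carrier_vec (m * p)" and Du: "D *\<^sub>v u = - z"
    and T: "0 < trimmed K m p z"
  obtains d where "d \<in> carrier_vec N" "d \<noteq> 0\<^sub>v N"
    and "0 < sigma_K K m p D" "sigma_K K m p D * norm2 d \<le> trimmed K m p z"
    and "\<And>t. 0 \<le> t \<Longrightarrow> t \<le> 1 \<Longrightarrow>
      trimmed K m p (z + t \<cdot>\<^sub>v (D *\<^sub>v d)) \<le> (1 - t) * trimmed K m p z"
proof -
  obtain \<Lambda> where \<Lambda>: "\<Lambda> \<subseteq> {..<m}" "card \<Lambda> = m - K"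
      "trimmed K m p z = (\<Sum>i\<in>\<Lambda>. bnorm p z i)"
    by (rule trimmed_attained)
  obtain r where r: "r div p \<in> \<Lambda>" "z $ r \<noteq> 0"
  proof -
    obtain i where i: "i \<in> \<Lambda>" "bnorm p z i \<noteq> 0"
      using T \<Lambda>(3) by (metis less_irrefl sum.neutral)
    have "\<exists>j<p. z $ (i * p + j) \<noteq> 0"
    proof (rule ccontr)
      assume "\<not> ?thesis"
      then have "bnorm p z i = 0" by (simp add: bnorm_def)
      then show False using i by simp
    qed
    then obtain j where "j < p" "z $ (i * p + j) \<noteq> 0" by blast
    then show ?thesis using that[of "i * p + j"] i by simp
  qed
  obtain d where d: "d \<in> carrier_vec N" "\<forall>r. r div p \<in> \<Lambda> \<longrightarrow> (D *\<^sub>v d) $ r = - z $ r"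
    and \<sigma>: "0 < sigma_K K m p D" "sigma_K K m p D * norm2 d \<le> L2_set (\<lambda>r. z $ r) {r. r div p \<in> \<Lambda>}"
    using exists_descent_direction[OF D p \<Lambda>(1,2) u z Du] r by blast
  have "sigma_K K m p D * norm2 d \<le> trimmed K m p z"
    using \<sigma>(2) L2_set_block_rows_le_sum_bnorm[OF p \<Lambda>(1), of z] \<Lambda>(3) by linarith
  moreover have "r < m * p" using less_mult_if_div_mem[OF p \<Lambda>(1) r(1)] .
  then have "d \<noteq> 0\<^sub>v N" using d(2) r D(1) by auto
  moreover have "trimmed K m p (z + t \<cdot>\<^sub>v (D *\<^sub>v d)) \<le> (1 - t) * trimmed K m p z"
    if "0 \<le> t" "t \<le> 1" for t
    using trimmed_add_smult_le[OF p \<Lambda>(1,2) z _ d(2) that] D(1) d(1) \<Lambda>(3) by simp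
  ultimately show ?thesis using that d(1) \<sigma>(1) by blast
qed

section \<open>Stationarity\<close>

lemma d_stationary_trimmed_descent:
  assumes stat: "d_stationary (tot_dim n L) (objective L n m p K \<gamma> c D f) x"
    and l: "l \<in> {1..L}" and \<gamma>: "0 \<le> \<gamma> l" and d: "d \<in> carrier_vec (n l)"
    and Df: "has_dir_deriv f x (emb n L l d) Df" and \<delta>: "0 < \<delta>"
    and decrease: "\<And>t. 0 < t \<Longrightarrow> t \<le> \<delta> \<Longrightarrow>
      trimmed (K l) (m l) (p l) (D l *\<^sub>v (blk n l x + t \<cdot>\<^sub>v d) - c l)
        \<le> trimmed (K l) (m l) (p l) (D l *\<^sub>v blk n l x - c l) - r * t"
  shows "\<gamma> l * r \<le> Df"
proof -
  let ?F = "objective L n m p K \<gamma> c D f" and ?e = "emb n L l d"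
  have x: "x \<in> carrier_vec (tot_dim n L)" using stat by (simp add: d_stationary_def)
  obtain DF where DF: "has_dir_deriv ?F x ?e DF" and "0 \<le> dir_deriv ?F x ?e"
    using stat emb_carrier[of n L l d] unfolding d_stationary_def by blast
  then have "0 \<le> DF" by (simp add: dir_deriv_eq)
  moreover have "DF \<le> Df + (- (\<gamma> l * r))"
  proof (rule has_dir_deriv_le[OF DF Df \<delta>])
    fix t :: real assume "0 < t" "t \<le> \<delta>"
    then have "\<gamma> l * trimmed (K l) (m l) (p l) (D l *\<^sub>v (blk n l x + t \<cdot>\<^sub>v d) - c l)
        \<le> \<gamma> l * (trimmed (K l) (m l) (p l) (D l *\<^sub>v blk n l x - c l) - r * t)"
      by (intro mult_left_mono[OF decrease \<gamma>])
    then show "?F (x + t \<cdot>\<^sub>v ?e) - ?F x \<le> f (x + t \<cdot>\<^sub>v ?e) - f x + - (\<gamma> l * r) * t"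
      unfolding objective_add_smult_emb[OF x l d] by (simp add: algebra_simps)
  qed
  ultimately show ?thesis by simp
qed

lemma trimmed_eq_0_if_sigma_K_bound:
  fixes f :: "real vec \<Rightarrow> real"
  assumes data: "0 < \<gamma> l" "1 \<le> p l" "c l \<in> carrier_vec (m l * p l)"
      "D l \<in> carrier_mat (m l * p l) (n l)" "D l \<noteq> 0\<^sub>m (m l * p l) (n l)"
    and l: "l \<in> {1..L}"
    and diff: "dir_differentiable (tot_dim n L) f"
    and stat: "d_stationary (tot_dim n L) (objective L n m p K \<gamma> c D f) x"
    and xbar: "xbar \<in> carrier_vec (n l)" "D l *\<^sub>v xbar - c l = 0\<^sub>v (m l * p l)"
    and \<Gamma>: "0 < \<Gamma>"
    and bound: "\<forall>d\<in>carrier_vec (n l). norm2 d = 1 \<longrightarrow> dir_deriv f x (emb n L l d) \<le> \<Gamma>"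
    and gamma: "\<Gamma> / sigma_K (K l) (m l) (p l) (D l) < \<gamma> l"
  shows "trimmed (K l) (m l) (p l) (D l *\<^sub>v blk n l x - c l) = 0"
proof (rule ccontr)
  define z where "z = D l *\<^sub>v blk n l x - c l"
  let ?T = "trimmed (K l) (m l) (p l) z" and ?\<sigma> = "sigma_K (K l) (m l) (p l) (D l)"
  assume "trimmed (K l) (m l) (p l) (D l *\<^sub>v blk n l x - c l) \<noteq> 0"
  then have T: "0 < ?T" using trimmed_nonneg by (metis z_def order_le_neq_trans)
  have x: "x \<in> carrier_vec (tot_dim n L)" using stat by (simp add: d_stationary_def)
  have z: "z \<in> carrier_vec (m l * p l)" using data by (simp add: z_def)
  have "D l *\<^sub>v xbar = c l" using eq_if_minus_vec_eq_0[OF _ data(3) xbar(2)] data(4) xbar(1) by simp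
  then have "D l *\<^sub>v (xbar - blk n l x) = c l - D l *\<^sub>v blk n l x"
    by (simp add: mult_minus_distrib_mat_vec[OF data(4) xbar(1) blk_carrier[of n l x]])
  also have "\<dots> = - z" using data(3,4) by (intro eq_vecI) (auto simp: z_def)
  finally have Du: "D l *\<^sub>v (xbar - blk n l x) = - z" .
  have u: "xbar - blk n l x \<in> carrier_vec (n l)" using xbar(1) by simp
  obtain d where d: "d \<in> carrier_vec (n l)" "d \<noteq> 0\<^sub>v (n l)"
    and \<sigma>: "0 < ?\<sigma>" "?\<sigma> * norm2 d \<le> ?T"
    and decrease: "\<And>t. 0 \<le> t \<Longrightarrow> t \<le> 1 \<Longrightarrow>
      trimmed (K l) (m l) (p l) (z + t \<cdot>\<^sub>v (D l *\<^sub>v d)) \<le> (1 - t) * ?T"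
    using exists_trimmed_descent_direction[OF data(4,5,2) u z Du T] by blast
  obtain Df where Df: "has_dir_deriv f x (emb n L l d) Df"
    using diff x d(1) unfolding dir_differentiable_def by (meson emb_carrier)
  have "\<gamma> l * ?T \<le> Df"
  proof (rule d_stationary_trimmed_descent[where \<delta>="1::real", OF stat l _ d(1) Df])
    fix t :: real assume t: "0 < t" "t \<le> 1"
    have "D l *\<^sub>v (blk n l x + t \<cdot>\<^sub>v d) - c l = z + t \<cdot>\<^sub>v (D l *\<^sub>v d)"
      using data(3,4) d(1) by (intro eq_vecI) (auto simp: z_def mult_mat_vec_add_smult)
    then show "trimmed (K l) (m l) (p l) (D l *\<^sub>v (blk n l x + t \<cdot>\<^sub>v d) - c l)
        \<le> trimmed (K l) (m l) (p l) (D l *\<^sub>v blk n l x - c l) - ?T * t"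
      using decrease[of t] t by (simp add: z_def algebra_simps)
  qed (simp_all add: less_imp_le[OF data(1)])
  also have "Df \<le> norm2 d * \<Gamma>"
    by (rule dir_deriv_emb_le_norm2[OF diff x bound d Df])
  also have "\<dots> \<le> ?T / ?\<sigma> * \<Gamma>"
    using \<sigma> \<Gamma> by (intro mult_right_mono) (auto simp: field_simps)
  also have "\<dots> = \<Gamma> / ?\<sigma> * ?T" by simp
  also have "\<dots> < \<gamma> l * ?T"
    using gamma T by (rule mult_strict_right_mono)
  finally show False by simp
qed

lemma sum_abs_add_smult_sgn_unit:
  fixes y :: "real vec"
  assumes "finite A" "i \<in> A" "A \<subseteq> {..<N}" "y \<in> carrier_vec N" "0 \<le> t" "t \<le> \<bar>y $ i\<bar>"
  shows "(\<Sum>j\<in>A. \<bar>(y + t \<cdot>\<^sub>v (- sgn (y $ i) \<cdot>\<^sub>v unit_vec N i)) $ j\<bar>) = (\<Sum>j\<in>A. \<bar>y $ j\<bar>) - t"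
proof -
  have "\<bar>(y + t \<cdot>\<^sub>v (- sgn (y $ i) \<cdot>\<^sub>v unit_vec N i)) $ j\<bar> = \<bar>y $ j\<bar> - (if j = i then t else 0)"
    if "j \<in> A" for j
  proof -
    have "j < N" using assms(3) that by auto
    then have "(y + t \<cdot>\<^sub>v (- sgn (y $ i) \<cdot>\<^sub>v unit_vec N i)) $ j
        = (if j = i then y $ i - t * sgn (y $ i) else y $ j)"
      using assms(4) by (simp add: unit_vec_def)
    then show ?thesis using assms(5,6) by (auto simp: sgn_if abs_if)
  qed
  then show ?thesis using assms(1,2) by (simp add: sum_subtractf)
qed

lemma exists_coordinate_descent_direction:
  fixes y :: "real vec"
  assumes y: "y \<in> carrier_vec N" and T: "0 < trimmed K N 1 y"
  obtains i where "i < N" "y $ i \<noteq> 0"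
    and "\<And>t. 0 \<le> t \<Longrightarrow> t \<le> \<bar>y $ i\<bar> \<Longrightarrow>
      trimmed K N 1 (y + t \<cdot>\<^sub>v (- sgn (y $ i) \<cdot>\<^sub>v unit_vec N i)) \<le> trimmed K N 1 y - t"
    and "\<And>t. 0 \<le> t \<Longrightarrow> t \<le> \<bar>y $ i\<bar> \<Longrightarrow>
      norm1 (y + t \<cdot>\<^sub>v (- sgn (y $ i) \<cdot>\<^sub>v unit_vec N i)) = norm1 y - t"
proof -
  obtain \<Lambda> where \<Lambda>: "\<Lambda> \<subseteq> {..<N}" "card \<Lambda> = N - K"
      "trimmed K N 1 y = (\<Sum>j\<in>\<Lambda>. bnorm 1 y j)"
    by (rule trimmed_attained)
  moreover have "(\<Sum>j\<in>\<Lambda>. bnorm 1 y j) = (\<Sum>j\<in>\<Lambda>. \<bar>y $ j\<bar>)"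
    by (intro sum.cong refl bnorm_1)
  ultimately have T_eq: "trimmed K N 1 y = (\<Sum>j\<in>\<Lambda>. \<bar>y $ j\<bar>)" by simp
  then obtain i where i: "i \<in> \<Lambda>" "y $ i \<noteq> 0"
    using T by (metis less_irrefl sum.neutral abs_zero)
  have fin: "finite \<Lambda>" using \<Lambda>(1) finite_subset by blast
  let ?y = "\<lambda>t. y + t \<cdot>\<^sub>v (- sgn (y $ i) \<cdot>\<^sub>v unit_vec N i)"
  have "trimmed K N 1 (?y t) \<le> trimmed K N 1 y - t" if "0 \<le> t" "t \<le> \<bar>y $ i\<bar>" for t
  proof -
    have "trimmed K N 1 (?y t) \<le> (\<Sum>j\<in>\<Lambda>. bnorm 1 (?y t) j)"
      by (rule trimmed_le[OF \<Lambda>(1,2)])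
    also have "\<dots> = (\<Sum>j\<in>\<Lambda>. \<bar>?y t $ j\<bar>)"
      by (intro sum.cong refl bnorm_1)
    also have "\<dots> = trimmed K N 1 y - t"
      using sum_abs_add_smult_sgn_unit[OF fin i(1) \<Lambda>(1) y that] T_eq by simp
    finally show ?thesis .
  qed
  moreover have "norm1 (?y t) = norm1 y - t" if "0 \<le> t" "t \<le> \<bar>y $ i\<bar>" for t
    using sum_abs_add_smult_sgn_unit[of "{..<N}" i N y t] that i \<Lambda>(1) y
    by (auto simp: norm1_def)
  ultimately show ?thesis using that i \<Lambda>(1) by blast
qed

lemma trimmed_eq_0_if_l1_bound:
  fixes g :: "real vec \<Rightarrow> real" and \<eta> :: "nat \<Rightarrow> real"
  assumes \<gamma>: "0 \<le> \<gamma> l" and l: "l \<in> {1..L}"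
    and id: "p l = 1" "m l = n l" "D l = 1\<^sub>m (n l)" "c l = 0\<^sub>v (n l)"
    and diff: "dir_differentiable (tot_dim n L) g"
    and stat: "d_stationary (tot_dim n L)
      (objective L n m p K \<gamma> c D (\<lambda>x. g x + (\<Sum>k\<in>{1..L}. \<eta> k * norm1 (blk n k x)))) x"
    and bound: "\<forall>d\<in>carrier_vec (n l). (\<forall>i<n l. d $ i \<in> {-1, 0, 1}) \<and> norm1 d = 1 \<longrightarrow>
      dir_deriv g x (emb n L l d) - \<eta> l \<le> \<Gamma>"
    and gamma: "\<Gamma> < \<gamma> l"
  shows "trimmed (K l) (n l) 1 (blk n l x) = 0"
proof (rule ccontr)
  define y where "y = blk n l x"
  define f where "f = (\<lambda>x. g x + (\<Sum>k\<in>{1..L}. \<eta> k * norm1 (blk n k x)))"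
  assume "trimmed (K l) (n l) 1 (blk n l x) \<noteq> 0"
  then have T: "0 < trimmed (K l) (n l) 1 y"
    using trimmed_nonneg by (metis y_def order_le_neq_trans)
  have y: "y \<in> carrier_vec (n l)" by (simp add: y_def)
  obtain i where i: "i < n l" "y $ i \<noteq> 0"
    and trimmed_decrease: "\<And>t. 0 \<le> t \<Longrightarrow> t \<le> \<bar>y $ i\<bar> \<Longrightarrow>
      trimmed (K l) (n l) 1 (y + t \<cdot>\<^sub>v (- sgn (y $ i) \<cdot>\<^sub>v unit_vec (n l) i))
        \<le> trimmed (K l) (n l) 1 y - t"
    and norm1_decrease: "\<And>t. 0 \<le> t \<Longrightarrow> t \<le> \<bar>y $ i\<bar> \<Longrightarrow>
      norm1 (y + t \<cdot>\<^sub>v (- sgn (y $ i) \<cdot>\<^sub>v unit_vec (n l) i)) = norm1 y - t"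
    using exists_coordinate_descent_direction[OF y T] by blast
  define d where "d = - sgn (y $ i) \<cdot>\<^sub>v unit_vec (n l) i"
  have d: "d \<in> carrier_vec (n l)" by (simp add: d_def)
  have d_simple: "(\<forall>j<n l. d $ j \<in> {-1, 0, 1}) \<and> norm1 d = 1"
    using i by (auto simp: d_def norm1_def sgn_if sum.delta)
  have x: "x \<in> carrier_vec (tot_dim n L)" using stat by (simp add: d_stationary_def)
  obtain Dg where Dg: "has_dir_deriv g x (emb n L l d) Dg"
    using diff x unfolding dir_differentiable_def by (meson emb_carrier)
  have step: "blk n l (x + t \<cdot>\<^sub>v emb n L l d) = y + t \<cdot>\<^sub>v d" for t
    using blk_add_smult_emb_same[OF x _ d] l by (simp add: y_def)
  have Df: "has_dir_deriv f x (emb n L l d) (Dg + - \<eta> l)"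
  proof (rule has_dir_deriv_add_linear[OF Dg])
    fix t :: real assume "0 < t" "t \<le> \<bar>y $ i\<bar>"
    then have n1: "norm1 (y + t \<cdot>\<^sub>v d) = norm1 y - t" by (simp add: norm1_decrease d_def)
    show "f (x + t \<cdot>\<^sub>v emb n L l d) - f x = g (x + t \<cdot>\<^sub>v emb n L l d) - g x + - \<eta> l * t"
      unfolding f_def sum_blk_add_smult_emb[OF x l, of "\<lambda>k v. \<eta> k * norm1 v"] step
        y_def[symmetric] n1
      by (simp add: algebra_simps)
  qed (use i in simp)
  have id_block: "D l *\<^sub>v v - c l = v" if "v \<in> carrier_vec (n l)" for v
    using that id by (intro eq_vecI) auto
  have "\<gamma> l * 1 \<le> Dg + - \<eta> l"
  proof (rule d_stationary_trimmed_descent[OF stat[folded f_def] l \<gamma> d Df])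
    fix t :: real assume "0 < t" "t \<le> \<bar>y $ i\<bar>"
    then show "trimmed (K l) (m l) (p l) (D l *\<^sub>v (blk n l x + t \<cdot>\<^sub>v d) - c l)
        \<le> trimmed (K l) (m l) (p l) (D l *\<^sub>v blk n l x - c l) - 1 * t"
      using trimmed_decrease[of t] y d by (simp add: id(1,2) id_block y_def[symmetric] d_def)
  qed (use i in simp)
  moreover have "Dg - \<eta> l \<le> \<Gamma>" using bound d d_simple dir_deriv_eq[OF Dg] by auto
  ultimately show False using gamma by simp
qed

theorem mainTheorem4:
  fixes L :: nat and n m p K :: "nat \<Rightarrow> nat" and \<gamma> :: "nat \<Rightarrow> real"
    and c :: "nat \<Rightarrow> real vec" and D :: "nat \<Rightarrow> real mat" and l :: nat
  assumes data: "\<And>k. k \<in> {1..L} \<Longrightarrow>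
      \<gamma> k > 0 \<and> p k \<ge> 1 \<and> K k < m k \<and> c k \<in> carrier_vec (m k * p k) \<and>
      D k \<in> carrier_mat (m k * p k) (n k) \<and> D k \<noteq> 0\<^sub>m (m k * p k) (n k)"
    and l: "l \<in> {1..L}"
  shows
   "(\<forall>(f :: real vec \<Rightarrow> real) xs \<Gamma>.
       dir_differentiable (tot_dim n L) f \<and>
       d_stationary (tot_dim n L) (objective L n m p K \<gamma> c D f) xs \<and>
       (\<exists>xbar\<in>carrier_vec (n l). D l *\<^sub>v xbar - c l = 0\<^sub>v (m l * p l)) \<and>
       \<Gamma> > 0 \<and>
       (\<forall>d\<in>carrier_vec (n l). norm2 d = 1 \<longrightarrow> dir_deriv f xs (emb n L l d) \<le> \<Gamma>) \<and>
       \<gamma> l > \<Gamma> / sigma_K (K l) (m l) (p l) (D l)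
     \<longrightarrow> trimmed (K l) (m l) (p l) (D l *\<^sub>v blk n l xs - c l) = 0)
  \<and>
   (\<forall>(g :: real vec \<Rightarrow> real) (\<eta> :: nat \<Rightarrow> real) xs \<Gamma>.
       p l = 1 \<and> m l = n l \<and> D l = 1\<^sub>m (n l) \<and> c l = 0\<^sub>v (n l) \<and>
       (\<forall>k\<in>{1..L}. \<eta> k \<ge> 0) \<and>
       dir_differentiable (tot_dim n L) g \<and>
       d_stationary (tot_dim n L)
         (objective L n m p K \<gamma> c D (\<lambda>x. g x + (\<Sum>k\<in>{1..L}. \<eta> k * norm1 (blk n k x)))) xs \<and>
       (\<forall>d\<in>carrier_vec (n l). (\<forall>i<n l. d $ i \<in> {-1, 0, 1}) \<and> norm1 d = 1 \<longrightarrow>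
           dir_deriv g xs (emb n L l d) - \<eta> l \<le> \<Gamma>) \<and>
       \<gamma> l > \<Gamma>
     \<longrightarrow> trimmed (K l) (n l) 1 (blk n l xs) = 0)"
proof -
  have data_l: "0 < \<gamma> l" "1 \<le> p l" "c l \<in> carrier_vec (m l * p l)"
      "D l \<in> carrier_mat (m l * p l) (n l)" "D l \<noteq> 0\<^sub>m (m l * p l) (n l)"
    using data[OF l] by auto
  show ?thesis
    using trimmed_eq_0_if_sigma_K_bound[where \<gamma>=\<gamma> and p=p and c=c and D=D and K=K and m=m
        and n=n and l=l and L=L, OF data_l l]
      trimmed_eq_0_if_l1_bound[where \<gamma>=\<gamma> and l=l and L=L, OF less_imp_le[OF data_l(1)] l]
    by blast
qed

end
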